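(* Let $k(\cdot\mid\theta)$ be the $\mathrm{N}(\theta,1)$ density, $q_0$ the $\mathrm{N}(0,1)$ density, $\theta^*\in\mathbb{R}$ and $x_1=\dots=x_n=\theta^*$. Then for every $s=1,\dots,n$ and every partition $A=\{A_1,\dots,A_s\}\in\tau_s(n)$, $$\frac{\prod_{j=1}^sm(x_{A_j})}{m(x_{1:n})}=\Big\{\frac{n+1}{\prod_{j=1}^s(a_j+1)}\Big\}^{1/2}\exp\Big\{\frac{{\theta^*}^2}{2}\Big(-\frac{n^2}{n+1}+\sum_{j=1}^s\frac{a_j^2}{a_j+1}\Big)\Big\}\le\Big(\frac{n}{\prod_{j=1}^sa_j}\Big)^{1/2}.$$
   Context: $\tau_s(n)$ is the set of partitions of $\{1,\dots,n\}$ into $s$ nonempty blocks, $a_j=|A_j|$, and for $B\subseteq\{1,\dots,n\}$, $m(x_B)=\int\prod_{i\in B}k(x_i\mid\theta)q_0(\theta)d\theta$. *)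

theory Defs
  imports "HOL-Probability.Probability" "HOL-Library.Disjoint_Sets"
begin

definition kern :: "real \<Rightarrow> real \<Rightarrow> real" where
  "kern x \<theta> = normal_density \<theta> 1 x"

definition q0 :: "real \<Rightarrow> real" where
  "q0 \<theta> = normal_density 0 1 \<theta>"

definition marg :: "(nat \<Rightarrow> real) \<Rightarrow> nat set \<Rightarrow> real" where
  "marg x B = (\<integral>\<theta>. (\<Prod>i\<in>B. kern (x i) \<theta>) * q0 \<theta> \<partial>lborel)"

definition tau :: "nat \<Rightarrow> nat \<Rightarrow> nat set set set" where
  "tau s n = {P. partition_on {1..n} P \<and> card P = s}"

end

theory Submission
  imports Defs
begin

text \<open>Completing the square in \<open>\<theta>\<close> shows that the integrand of \<open>m(x\<^sub>B)\<close> for a block of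
  \<open>a\<close> observations all equal to \<open>\<theta>*\<close> is a constant multiple of the
  \<open>N(a\<theta>*/(a+1), 1/(a+1))\<close> density, so that
  \<open>m(x\<^sub>B) = \<phi>(\<theta>*)\<^sup>a exp(\<theta>*\<^sup>2 a\<^sup>2 / (2(a+1))) / sqrt(a+1)\<close>, with \<open>\<phi>\<close> the standard normal density.
  The block sizes sum to \<open>n\<close>, so the factors \<open>\<phi>(\<theta>*)\<^sup>a\<close> cancel in the ratio, which gives the
  identity. For the bound, \<open>a/(a+1) \<le> n/(n+1)\<close> for every block size \<open>a \<le> n\<close> makes the exponent
  non-positive, and \<open>\<Prod>(a\<^sub>j+1)/\<Prod>a\<^sub>j \<ge> (a\<^sub>1+1)/a\<^sub>1 \<ge> (n+1)/n\<close>.\<close>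

definition marg_repeated :: "nat \<Rightarrow> real \<Rightarrow> real" where
  "marg_repeated k \<theta> = normal_density 0 1 \<theta> ^ k * exp (\<theta>\<^sup>2 / 2 * ((real k)\<^sup>2 / real (k + 1)))
     / sqrt (real (k + 1))"

lemma complete_square:
  fixes a \<theta> t :: real
  assumes "a + 1 \<noteq> 0"
  shows "a * (\<theta> - t)\<^sup>2 + t\<^sup>2 = a * \<theta>\<^sup>2 - a\<^sup>2 * \<theta>\<^sup>2 / (a + 1) + (a + 1) * (t - a * \<theta> / (a + 1))\<^sup>2"
proof -
  have "t - a * \<theta> / (a + 1) = ((a + 1) * t - a * \<theta>) / (a + 1)"
    using assms by (simp add: field_simps)
  then have "(a + 1) * (t - a * \<theta> / (a + 1))\<^sup>2 = ((a + 1) * t - a * \<theta>)\<^sup>2 / (a + 1)"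
    using assms by (simp add: power_divide power2_eq_square)
  moreover have "a * \<theta>\<^sup>2 - a\<^sup>2 * \<theta>\<^sup>2 / (a + 1) = a * \<theta>\<^sup>2 / (a + 1)"
    using assms by (simp add: power2_eq_square field_simps)
  ultimately show ?thesis
    using assms by (simp add: add_divide_distrib[symmetric] eq_divide_eq) algebra
qed

lemma normal_density_pow_mult_std_normal:
  "normal_density t 1 \<theta> ^ k * normal_density 0 1 t
     = marg_repeated k \<theta> * normal_density (k * \<theta> / (k + 1)) (1 / sqrt (k + 1)) t"
proof -
  define a where "a = real k"
  define u where "u = t - a * \<theta> / (a + 1)"
  have a1: "a + 1 > 0" by (simp add: a_def)
  have "exp (- (a * (\<theta> - t)\<^sup>2 + t\<^sup>2) / 2)
      = exp (- (a * \<theta>\<^sup>2) / 2) * exp (\<theta>\<^sup>2 / 2 * (a\<^sup>2 / (a + 1))) * exp (- (a + 1) * u\<^sup>2 / 2)"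
    unfolding complete_square[of a, OF a1[THEN less_imp_neq, symmetric]] exp_add[symmetric] u_def
    by (simp add: field_simps)
  then have "normal_density t 1 \<theta> ^ k * normal_density 0 1 t
      = normal_density 0 1 \<theta> ^ k * exp (\<theta>\<^sup>2 / 2 * (a\<^sup>2 / (a + 1))) * (exp (- (a + 1) * u\<^sup>2 / 2) / sqrt (2 * pi))"
    by (simp add: normal_density_def a_def power_divide exp_of_nat_mult[symmetric] exp_add[symmetric]
        add_divide_distrib mult.commute)
  also have "exp (- (a + 1) * u\<^sup>2 / 2) / sqrt (2 * pi)
      = normal_density (k * \<theta> / (k + 1)) (1 / sqrt (k + 1)) t / sqrt (a + 1)"
    using a1 by (simp add: normal_density_def u_def a_def real_sqrt_divide field_simps)
  finally show ?thesis
    by (simp add: marg_repeated_def a_def add.commute)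
qed

lemma marg_eq_marg_repeated:
  assumes "\<And>i. i \<in> B \<Longrightarrow> x i = \<theta>"
  shows "marg x B = marg_repeated (card B) \<theta>"
proof -
  have "(\<Prod>i\<in>B. kern (x i) t) * q0 t = marg_repeated (card B) \<theta>
      * normal_density (real (card B) * \<theta> / (real (card B) + 1)) (1 / sqrt (real (card B) + 1)) t"
    for t
    using normal_density_pow_mult_std_normal[of t \<theta> "card B"] assms by (simp add: kern_def q0_def)
  then show ?thesis
    by (simp add: marg_def)
qed

lemma prod_marg_repeated_div_marg_repeated:
  fixes k :: "'a \<Rightarrow> nat"
  assumes "finite A" and "sum k A = n"
  shows "(\<Prod>i\<in>A. marg_repeated (k i) \<theta>) / marg_repeated n \<theta>
    = (real (n + 1) / (\<Prod>i\<in>A. real (k i + 1))) powr (1/2)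
      * exp (\<theta>\<^sup>2 / 2 * (- (real n)\<^sup>2 / real (n + 1) + (\<Sum>i\<in>A. (real (k i))\<^sup>2 / real (k i + 1))))"
proof -
  define S where "S = (\<Sum>i\<in>A. (real (k i))\<^sup>2 / real (k i + 1))"
  define P where "P = (\<Prod>i\<in>A. real (k i + 1))"
  define E where "E = normal_density 0 1 \<theta> ^ n"
  have "P > 0" unfolding P_def by (rule prod_pos) simp
  have "E > 0" unfolding E_def by (simp add: normal_density_pos)
  have "(\<Prod>i\<in>A. marg_repeated (k i) \<theta>) = E * exp (\<theta>\<^sup>2 / 2 * S) / P powr (1/2)"
    using assms
    by (simp add: marg_repeated_def S_def P_def E_def prod_dividef prod.distrib power_sum[symmetric]
        exp_sum[symmetric] sum_distrib_left prod_powr_distrib powr_half_sqrt)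
  moreover have "marg_repeated n \<theta> = E * exp (\<theta>\<^sup>2 / 2 * ((real n)\<^sup>2 / real (n + 1))) / real (n + 1) powr (1/2)"
    by (simp add: marg_repeated_def E_def powr_half_sqrt)
  ultimately have "(\<Prod>i\<in>A. marg_repeated (k i) \<theta>) / marg_repeated n \<theta>
      = real (n + 1) powr (1/2) / P powr (1/2) * (exp (\<theta>\<^sup>2 / 2 * S) / exp (\<theta>\<^sup>2 / 2 * ((real n)\<^sup>2 / real (n + 1))))"
    using \<open>E > 0\<close> \<open>P > 0\<close> by simp
  also have "\<dots> = (real (n + 1) / P) powr (1/2) * exp (\<theta>\<^sup>2 / 2 * (- (real n)\<^sup>2 / real (n + 1) + S))"
    by (simp add: powr_divide exp_diff[symmetric] algebra_simps)
  finally show ?thesis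
    unfolding S_def P_def .
qed

lemma sum_sq_div_add_one_le:
  fixes f :: "'a \<Rightarrow> real"
  assumes "finite A" and "\<And>i. i \<in> A \<Longrightarrow> 0 \<le> f i" and "sum f A = c"
  shows "(\<Sum>i\<in>A. (f i)\<^sup>2 / (f i + 1)) \<le> c\<^sup>2 / (c + 1)"
proof -
  have "(f i)\<^sup>2 / (f i + 1) \<le> f i * (c / (c + 1))" if "i \<in> A" for i
  proof -
    have "f i \<le> c"
      using member_le_sum[of i A f] assms that by simp
    then have "f i / (f i + 1) \<le> c / (c + 1)"
      using assms(2)[OF that] by (simp add: field_simps)
    then have "f i * (f i / (f i + 1)) \<le> f i * (c / (c + 1))"
      using assms(2)[OF that] by (rule mult_left_mono)
    then show ?thesis
      by (simp add: power2_eq_square)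
  qed
  then have "(\<Sum>i\<in>A. (f i)\<^sup>2 / (f i + 1)) \<le> (\<Sum>i\<in>A. f i * (c / (c + 1)))"
    by (rule sum_mono)
  also have "\<dots> = c\<^sup>2 / (c + 1)"
    unfolding sum_distrib_right[symmetric] assms(3) by (simp add: power2_eq_square)
  finally show ?thesis .
qed

lemma add_one_div_prod_add_one_le:
  fixes f :: "'a \<Rightarrow> real"
  assumes "finite A" and "A \<noteq> {}" and "\<And>i. i \<in> A \<Longrightarrow> 0 < f i" and "sum f A = c"
  shows "(c + 1) / (\<Prod>i\<in>A. f i + 1) \<le> c / (\<Prod>i\<in>A. f i)"
proof -
  obtain j where "j \<in> A" using assms(2) by blast
  have "f j \<le> c"
    using member_le_sum[of j A f] assms \<open>j \<in> A\<close> by (simp add: less_imp_le)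
  have nonneg: "0 \<le> f i" if "i \<in> A" for i
    using assms(3)[OF that] by simp
  have rest: "0 \<le> (\<Prod>i\<in>A - {j}. f i)" "(\<Prod>i\<in>A - {j}. f i) \<le> (\<Prod>i\<in>A - {j}. f i + 1)"
    using nonneg by (auto intro!: prod_nonneg prod_mono)
  have "(c + 1) * (\<Prod>i\<in>A. f i) = (c + 1) * f j * (\<Prod>i\<in>A - {j}. f i)"
    using assms(1) \<open>j \<in> A\<close> by (simp add: prod.remove)
  also have "\<dots> \<le> c * (f j + 1) * (\<Prod>i\<in>A - {j}. f i)"
    using \<open>f j \<le> c\<close> rest(1) by (intro mult_right_mono) (auto simp: algebra_simps)
  also have "\<dots> \<le> c * (f j + 1) * (\<Prod>i\<in>A - {j}. f i + 1)"
    using \<open>f j \<le> c\<close> assms(3)[OF \<open>j \<in> A\<close>] rest(2) by (intro mult_left_mono) auto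
  also have "\<dots> = c * (\<Prod>i\<in>A. f i + 1)"
    using assms(1) \<open>j \<in> A\<close> by (simp add: prod.remove)
  finally show ?thesis
    using assms(3) by (simp add: divide_simps prod_pos add_pos_pos less_imp_le mult.commute)
qed

lemma partition_on_sum_card:
  assumes "finite S" and "partition_on S P"
  shows "(\<Sum>B\<in>P. card B) = card S"
proof -
  have "finite B" if "B \<in> P" for B
    using assms that by (metis Union_upper finite_subset partition_onD1)
  then show ?thesis
    using card_Union_disjoint[of P] partition_onD1[OF assms(2)] partition_onD2[OF assms(2)] by simp
qed

theorem lemmaS19:
  fixes x :: "nat \<Rightarrow> real" and \<theta>s :: real and n s :: nat and A :: "nat set set"
  assumes "\<forall>i\<in>{1..n}. x i = \<theta>s"
    and "s \<in> {1..n}"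
    and "A \<in> tau s n"
  shows "((\<Prod>B\<in>A. marg x B) / marg x {1..n}
           = (real (n + 1) / (\<Prod>B\<in>A. real (card B + 1))) powr (1/2)
             * exp (\<theta>s\<^sup>2 / 2 * (- (real n)\<^sup>2 / real (n + 1)
                    + (\<Sum>B\<in>A. (real (card B))\<^sup>2 / real (card B + 1))))
       \<and> (real (n + 1) / (\<Prod>B\<in>A. real (card B + 1))) powr (1/2)
             * exp (\<theta>s\<^sup>2 / 2 * (- (real n)\<^sup>2 / real (n + 1)
                    + (\<Sum>B\<in>A. (real (card B))\<^sup>2 / real (card B + 1))))
         \<le> (real n / (\<Prod>B\<in>A. real (card B))) powr (1/2))"
proof -
  define R where "R = (real (n + 1) / (\<Prod>B\<in>A. real (card B + 1))) powr (1/2)"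
  define E where "E = exp (\<theta>s\<^sup>2 / 2 * (- (real n)\<^sup>2 / real (n + 1)
    + (\<Sum>B\<in>A. (real (card B))\<^sup>2 / real (card B + 1))))"
  have part: "partition_on {1..n} A" and "card A = s"
    using assms(3) by (auto simp: tau_def)
  then have "A \<noteq> {}" and "finite A"
    using assms(2) finite_elements[OF _ part] by auto
  have block_pos: "0 < card B" if "B \<in> A" for B
    using part that by (metis Union_upper card_gt_0_iff finite_atLeastAtMost finite_subset
        partition_onD1 partition_onD3)
  have sum_card: "(\<Sum>B\<in>A. real (card B)) = real n"
    using partition_on_sum_card[OF _ part] by (simp flip: of_nat_sum)
  have "(\<Prod>B\<in>A. marg x B) = (\<Prod>B\<in>A. marg_repeated (card B) \<theta>s)"
    using assms(1) part by (intro prod.cong refl marg_eq_marg_repeated) (auto dest: partition_onD1)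
  moreover have "marg x {1..n} = marg_repeated n \<theta>s"
    using assms(1) marg_eq_marg_repeated[of "{1..n}" x \<theta>s] by simp
  ultimately have ratio: "(\<Prod>B\<in>A. marg x B) / marg x {1..n} = R * E"
    using prod_marg_repeated_div_marg_repeated[OF \<open>finite A\<close> partition_on_sum_card[OF _ part]]
    by (simp add: R_def E_def)
  have "(\<Sum>B\<in>A. (real (card B))\<^sup>2 / real (card B + 1)) \<le> (real n)\<^sup>2 / real (n + 1)"
    using sum_sq_div_add_one_le[OF \<open>finite A\<close> _ sum_card] by (simp add: add.commute)
  then have "E \<le> 1"
    by (simp add: E_def mult_nonneg_nonpos)
  have "real (n + 1) / (\<Prod>B\<in>A. real (card B + 1)) \<le> real n / (\<Prod>B\<in>A. real (card B))"
    using add_one_div_prod_add_one_le[OF \<open>finite A\<close> \<open>A \<noteq> {}\<close> _ sum_card] block_pos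
    by (simp add: add.commute)
  then have "R \<le> (real n / (\<Prod>B\<in>A. real (card B))) powr (1/2)"
    unfolding R_def by (intro powr_mono2) (auto intro!: divide_nonneg_nonneg prod_nonneg)
  then show ?thesis
    using ratio mult_left_le[OF \<open>E \<le> 1\<close>, of R] by (simp add: R_def E_def)
qed

end
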